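(* Let $\mathcal U$ be a balanced critical update family, $\alpha=\alpha(\mathcal U)$, and $\mathcal S_B$, $\rho$ as in the context. Let $D$ be an $\mathcal S_B$-droplet and let $Y\subset\mathbb Z^2$ have $|Y|\le\alpha-1$. Then $\|x-Y\|\le\rho$ for every $x\in[D\cup Y]\setminus D$.
   Context: Update family $\mathcal U$: finite collection of finite subsets of $\mathbb Z^2\setminus\{0\}$, $A_{t+1}=A_t\cup\{x:x+X\subset A_t,\ X\in\mathcal U\}$, $[A]=\bigcup_tA_t$. $\mathbb H_u=\{x\in\mathbb Z^2:\langle x,u\rangle<0\}$, $\mathbb H_u(a)=\{x\in\mathbb Z^2:\langle x-a,u\rangle<0\}$; $u$ stable if $[\mathbb H_u]=\mathbb H_u$. For rational $u$, $\ell_u=\{x:\langle x,u\rangle=0\}$, $\ell_u^\pm$ = origin plus sites of $\ell_u$ right/left of the origin looking in direction $u$, $\alpha^\pm(u)$ = minimal $|Z|$ with $[\mathbb H_u\cup Z]\cap\ell_u^\pm$ infinite, $\bar\alpha(u)=\min\{\alpha^+(u),\alpha^-(u)\}$; $\alpha(u)=\bar\alpha(u)$ if both are finite, else $\infty$; $\alpha(\mathcal U)=\min_C\sup_{u\in C}\alpha(u)$ over open semicircles. Critical and balanced: $1\le\alpha(\mathcal U)<\infty$ and there is a closed semicircle on which $\alpha(u)\le\alpha(\mathcal U)$. $\mathcal S_B$ is a fixed finite set of stable directions with $\bar\alpha(u)\ge\alpha$ for all $u\in\mathcal S_B$ and meeting every open semicircle. For $\mathcal T\subset S^1$ a $\mathcal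 T$-droplet is a non-empty set $\bigcap_{u\in\mathcal T}\mathbb H_u(a_u)$ with $a_u\in\mathbb Z^2$. $\rho:=\max\{\|y-Z\|: u\in\mathcal S_B,\ Z\subset\mathbb Z^2,\ |Z|=\alpha-1,\ y\in[\mathbb H_u\cup Z]\setminus\mathbb H_u\}$ (finite), where $\|x-Y\|=\min_{y\in Y}\|x-y\|$ is Euclidean. *)

theory Defs
  imports Complex_Main "HOL-Library.Extended_Nat"
begin

type_synonym site = "int \<times> int"
type_synonym dir = "real \<times> real"

definition S1 :: "dir set" where
  "S1 = {u. (fst u)^2 + (snd u)^2 = 1}"

definition ipr :: "dir \<Rightarrow> dir \<Rightarrow> real" where
  "ipr v u = fst v * fst u + snd v * snd u"

definition ip :: "site \<Rightarrow> dir \<Rightarrow> real" where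
  "ip x u = real_of_int (fst x) * fst u + real_of_int (snd x) * snd u"

definition update_family :: "site set set \<Rightarrow> bool" where
  "update_family U \<longleftrightarrow> finite U \<and> (\<forall>X\<in>U. finite X \<and> (0,0) \<notin> X)"

definition bp_step :: "site set set \<Rightarrow> site set \<Rightarrow> site set" where
  "bp_step U A = A \<union> {x. \<exists>X\<in>U. (\<lambda>y. (fst x + fst y, snd x + snd y)) ` X \<subseteq> A}"

definition bp_closure :: "site set set \<Rightarrow> site set \<Rightarrow> site set" where
  "bp_closure U A = (\<Union>t. (bp_step U ^^ t) A)"

definition H :: "dir \<Rightarrow> site set" where
  "H u = {x. ip x u < 0}"

definition Hs :: "dir \<Rightarrow> site \<Rightarrow> site set" where
  "Hs u a = {x. ip (fst x - fst a, snd x - snd a) u < 0}"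

definition stable :: "site set set \<Rightarrow> dir \<Rightarrow> bool" where
  "stable U u \<longleftrightarrow> u \<in> S1 \<and> bp_closure U (H u) = H u"

definition rational_dir :: "dir \<Rightarrow> bool" where
  "rational_dir u \<longleftrightarrow> (\<exists>p q :: int. (p, q) \<noteq> (0, 0) \<and>
     u = (real_of_int p / sqrt (real_of_int (p^2 + q^2)), real_of_int q / sqrt (real_of_int (p^2 + q^2))))"

text \<open>Sites of the line l_u to the right (+) / left (-) of the origin when looking in direction u,
  together with the origin.\<close>
definition lplus :: "dir \<Rightarrow> site set" where
  "lplus u = {x. ip x u = 0 \<and> ip x (snd u, - fst u) \<ge> 0}"

definition lminus :: "dir \<Rightarrow> site set" where
  "lminus u = {x. ip x u = 0 \<and> ip x (snd u, - fst u) \<le> 0}"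

definition alpha_side :: "site set set \<Rightarrow> site set \<Rightarrow> dir \<Rightarrow> enat" where
  "alpha_side U L u = Inf {enat (card Z) | Z. finite Z \<and> infinite (bp_closure U (H u \<union> Z) \<inter> L)}"

definition alpha_plus :: "site set set \<Rightarrow> dir \<Rightarrow> enat" where
  "alpha_plus U u = alpha_side U (lplus u) u"

definition alpha_minus :: "site set set \<Rightarrow> dir \<Rightarrow> enat" where
  "alpha_minus U u = alpha_side U (lminus u) u"

definition alpha_bar :: "site set set \<Rightarrow> dir \<Rightarrow> enat" where
  "alpha_bar U u = min (alpha_plus U u) (alpha_minus U u)"

definition alpha_dir :: "site set set \<Rightarrow> dir \<Rightarrow> enat" where
  "alpha_dir U u = (if alpha_plus U u < \<infinity> \<and> alpha_minus U u < \<infinity> then alpha_bar U u else \<infinity>)"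

definition alpha_U :: "site set set \<Rightarrow> enat" where
  "alpha_U U = (INF w\<in>S1. SUP u\<in>{u\<in>S1. rational_dir u \<and> ipr u w > 0}. alpha_dir U u)"

definition critical_balanced :: "site set set \<Rightarrow> bool" where
  "critical_balanced U \<longleftrightarrow> 1 \<le> alpha_U U \<and> alpha_U U < \<infinity> \<and>
     (\<exists>w\<in>S1. \<forall>u\<in>S1. rational_dir u \<and> ipr u w \<ge> 0 \<longrightarrow> alpha_dir U u \<le> alpha_U U)"

definition sdist :: "site \<Rightarrow> site \<Rightarrow> real" where
  "sdist x y = sqrt (real_of_int ((fst x - fst y)^2 + (snd x - snd y)^2))"

definition setdist :: "site \<Rightarrow> site set \<Rightarrow> real" where
  "setdist x Y = Min ((sdist x) ` Y)"

definition rho :: "site set set \<Rightarrow> dir set \<Rightarrow> nat \<Rightarrow> real" where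
  "rho U SB a = Sup {setdist y Z | u Z y. u \<in> SB \<and> finite Z \<and> card Z = a - 1 \<and>
                       y \<in> bp_closure U (H u \<union> Z) - H u}"

definition droplet :: "dir set \<Rightarrow> site set \<Rightarrow> bool" where
  "droplet T D \<longleftrightarrow> D \<noteq> {} \<and> (\<exists>a :: dir \<Rightarrow> site. D = (\<Inter>u\<in>T. Hs u (a u)))"

end

theory Submission
  imports Defs "HOL-Analysis.Analysis"
begin

text \<open>A site infected from $D \cup Y$ but lying outside $D$ lies outside one of the half-planes
  $\mathbb H_u(a_u)$ cutting out $D$, and after a translation it is infected from $\mathbb H_u$
  together with a translate of $Y$; padding $Y$ with sites deep inside $\mathbb H_u$ brings it to
  exactly $\alpha - 1$ sites without changing the closure or the distance. So everything reduces
  to the finiteness of $\rho$: the sites infected by $\mathbb H_u$ and at most $\alpha - 1$ extra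
  sites stay within bounded distance of those sites. This is proved by induction on the number of
  extra sites. If they split into two far-apart groups, the two closures do not interact. If they
  form a cluster far from $\mathbb H_u$, a closed droplet around the cluster confines the
  infection. If the cluster is near the boundary line $\ell_u$, then up to translation along
  $\ell_u$ there are only finitely many configurations, and each infects only finitely many sites
  outside $\mathbb H_u$, because $\bar\alpha(u) \ge \alpha$ makes every line parallel to $\ell_u$
  meet the closure in a finite set.\<close>

hide_const (open) Elementary_Metric_Spaces.setdist

section \<open>Closed sets of the bootstrap percolation operator\<close>

definition bp_closed :: "site set set \<Rightarrow> site set \<Rightarrow> bool" where
  "bp_closed U C \<longleftrightarrow> (\<forall>x. \<forall>X\<in>U. (+) x ` X \<subseteq> C \<longrightarrow> x \<in> C)"

lemma bp_step_eq: "bp_step U A = A \<union> {x. \<exists>X\<in>U. (+) x ` X \<subseteq> A}"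
proof -
  have "(fst x + fst y, snd x + snd y) = x + y" for x y :: site
    by (simp add: prod_eq_iff)
  then show ?thesis unfolding bp_step_def by simp
qed

lemma bp_step_iter_mono: "m \<le> n \<Longrightarrow> (bp_step U ^^ m) A \<subseteq> (bp_step U ^^ n) A"
  by (rule lift_Suc_mono_le[where f = "\<lambda>n. (bp_step U ^^ n) A"]) (auto simp: bp_step_eq)

lemma subset_bp_closure: "A \<subseteq> bp_closure U A"
  unfolding bp_closure_def by (metis UN_upper UNIV_I funpow_0)

lemma bp_closed_bp_closure:
  assumes "update_family U"
  shows "bp_closed U (bp_closure U A)"
  unfolding bp_closed_def
proof (intro allI ballI impI)
  fix x X assume X: "X \<in> U" and sub: "(+) x ` X \<subseteq> bp_closure U A"
  have "finite X" using assms X unfolding update_family_def by auto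
  moreover have "eventually (\<lambda>t. x + y \<in> (bp_step U ^^ t) A) sequentially" if "y \<in> X" for y
  proof -
    have "x + y \<in> bp_closure U A" using sub that by (rule subsetD[OF _ imageI])
    then obtain s where "x + y \<in> (bp_step U ^^ s) A"
      unfolding bp_closure_def by blast
    then show ?thesis
      unfolding eventually_sequentially by (meson bp_step_iter_mono subsetD)
  qed
  ultimately have "eventually (\<lambda>t. \<forall>y\<in>X. x + y \<in> (bp_step U ^^ t) A) sequentially"
    by (simp add: eventually_ball_finite)
  then obtain t where "\<forall>y\<in>X. x + y \<in> (bp_step U ^^ t) A"
    unfolding eventually_sequentially by blast
  then have "x \<in> bp_step U ((bp_step U ^^ t) A)"
    using X unfolding bp_step_eq by blast
  then show "x \<in> bp_closure U A"
    unfolding bp_closure_def by (metis UNIV_I UN_iff funpow.simps(2) comp_apply)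
qed

lemma bp_closure_least:
  assumes "bp_closed U C" "A \<subseteq> C"
  shows "bp_closure U A \<subseteq> C"
proof -
  have "(bp_step U ^^ t) A \<subseteq> C" for t
  proof (induction t)
    case (Suc t)
    have "bp_step U ((bp_step U ^^ t) A) \<subseteq> C"
      using Suc assms(1) unfolding bp_closed_def bp_step_eq[of U "(bp_step U ^^ t) A"] by blast
    then show ?case by simp
  qed (use assms(2) in simp)
  then show ?thesis unfolding bp_closure_def by blast
qed

lemma bp_closure_mono:
  assumes "update_family U" "A \<subseteq> B"
  shows "bp_closure U A \<subseteq> bp_closure U B"
  by (rule bp_closure_least[OF bp_closed_bp_closure[OF assms(1)]])
    (use subset_bp_closure[of B U] assms(2) in blast)

lemma bp_closed_INT: "(\<And>i. i \<in> I \<Longrightarrow> bp_closed U (C i)) \<Longrightarrow> bp_closed U (\<Inter>i\<in>I. C i)"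
  unfolding bp_closed_def by (meson INT_I le_INF_iff)

lemma bp_closed_translate:
  assumes "bp_closed U C"
  shows "bp_closed U ((+) v ` C)"
  unfolding bp_closed_def
proof (intro allI ballI impI)
  fix x X assume X: "X \<in> U" and sub: "(+) x ` X \<subseteq> (+) v ` C"
  have "(+) (x - v) ` X \<subseteq> C"
  proof
    fix z assume "z \<in> (+) (x - v) ` X"
    then obtain y where "y \<in> X" "z = x - v + y" by auto
    with sub obtain c where "c \<in> C" "x + y = v + c" by blast
    then show "z \<in> C" using \<open>z = x - v + y\<close> by (simp add: algebra_simps)
  qed
  then have "x - v \<in> C" using assms X unfolding bp_closed_def by blast
  then show "x \<in> (+) v ` C" by (rule rev_image_eqI) simp
qed

lemma bp_closure_translate:
  assumes "update_family U"
  shows "bp_closure U ((+) v ` A) = (+) v ` bp_closure U A"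
proof
  have *: "bp_closure U ((+) w ` B) \<subseteq> (+) w ` bp_closure U B" for w B
    by (rule bp_closure_least[OF bp_closed_translate[OF bp_closed_bp_closure[OF assms]]])
      (rule image_mono[OF subset_bp_closure])
  show "bp_closure U ((+) v ` A) \<subseteq> (+) v ` bp_closure U A" by (rule *)
  have "bp_closure U A \<subseteq> (+) (- v) ` bp_closure U ((+) v ` A)"
    using *[of "- v" "(+) v ` A"] by (simp add: image_image)
  then show "(+) v ` bp_closure U A \<subseteq> bp_closure U ((+) v ` A)"
    by (auto simp: image_image)
qed

lemma stable_bp_closed: "update_family U \<Longrightarrow> stable U u \<Longrightarrow> bp_closed U (H u)"
  unfolding stable_def by (metis bp_closed_bp_closure)

lemma Hs_eq_translate: "Hs u a = (+) a ` H u"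
proof (rule set_eqI)
  fix x
  have "x \<in> (+) a ` H u \<longleftrightarrow> x - a \<in> H u"
  proof
    assume "x \<in> (+) a ` H u"
    then obtain y where "y \<in> H u" "x = a + y" by blast
    then show "x - a \<in> H u" by simp
  next
    assume "x - a \<in> H u"
    then show "x \<in> (+) a ` H u" by (rule rev_image_eqI) simp
  qed
  then show "x \<in> Hs u a \<longleftrightarrow> x \<in> (+) a ` H u"
    by (simp add: Hs_def H_def ip_def)
qed

lemma stable_bp_closed_Hs: "update_family U \<Longrightarrow> stable U u \<Longrightarrow> bp_closed U (Hs u a)"
  unfolding Hs_eq_translate by (rule bp_closed_translate[OF stable_bp_closed])

section \<open>The $\ell^1$ norm on sites\<close>

definition l1 :: "site \<Rightarrow> int" where
  "l1 x = \<bar>fst x\<bar> + \<bar>snd x\<bar>"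

lemma l1_add: "l1 (x + y) \<le> l1 x + l1 y"
  unfolding l1_def by simp

lemma l1_minus_commute: "l1 (x - y) = l1 (y - x)"
  unfolding l1_def by simp

lemma l1_triangle: "l1 (x - z) \<le> l1 (x - y) + l1 (y - z)"
  using l1_add[of "x - y" "y - z"] by (simp add: algebra_simps)

lemma abs_lincomb_le:
  fixes a b p q M :: "'a :: linordered_idom"
  assumes "\<bar>a\<bar> \<le> M" "\<bar>b\<bar> \<le> M"
  shows "\<bar>p * a + q * b\<bar> \<le> (\<bar>p\<bar> + \<bar>q\<bar>) * M"
proof -
  have "\<bar>p * a + q * b\<bar> \<le> \<bar>p\<bar> * \<bar>a\<bar> + \<bar>q\<bar> * \<bar>b\<bar>"
    by (metis abs_mult abs_triangle_ineq)
  also have "\<dots> \<le> \<bar>p\<bar> * M + \<bar>q\<bar> * M"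
    using assms by (intro add_mono mult_left_mono) simp_all
  finally show ?thesis by (simp add: algebra_simps)
qed

lemma card_translate: "card ((+) v ` W) = card (W :: site set)"
  by (rule card_image) (simp add: inj_on_def)

lemma finite_l1_ball: "finite {x. l1 x \<le> M}"
proof (rule finite_subset)
  show "{x. l1 x \<le> M} \<subseteq> {-M..M} \<times> {-M..M}" unfolding l1_def by auto
qed simp

lemma finite_bounded_above:
  assumes "finite A"
  shows "\<exists>M :: 'b :: linorder. \<forall>x\<in>A. f x \<le> M"
proof (cases "A = {}")
  case False
  then have "\<forall>x\<in>A. f x \<le> Max (f ` A)" using assms by simp
  then show ?thesis by blast
qed simp

lemma update_family_radius:
  assumes "update_family U"
  obtains r where "0 \<le> r" "\<forall>X\<in>U. \<forall>v\<in>X. l1 v \<le> r"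
proof -
  have "finite (\<Union>U)" using assms unfolding update_family_def by auto
  then obtain M where "\<forall>v\<in>\<Union>U. l1 v \<le> M" using finite_bounded_above by blast
  then show thesis by (intro that[of "max M 0"]) (simp_all add: le_max_iff_disj)
qed

text \<open>A rule placed at a site outside $C_1 \cup C_2$ would have to meet both $C_1 - C_2$
  and $C_2 - C_1$, at two points of $\ell^1$ distance at most $2r$.\<close>
lemma bp_closed_Un_far:
  assumes "bp_closed U C1" "bp_closed U C2" and r: "\<forall>X\<in>U. \<forall>v\<in>X. l1 v \<le> r"
    and far: "\<And>p q. p \<in> C1 - C2 \<Longrightarrow> q \<in> C2 - C1 \<Longrightarrow> 2 * r < l1 (p - q)"
  shows "bp_closed U (C1 \<union> C2)"
  unfolding bp_closed_def
proof (intro allI ballI impI)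
  fix x X assume X: "X \<in> U" and sub: "(+) x ` X \<subseteq> C1 \<union> C2"
  show "x \<in> C1 \<union> C2"
  proof (rule ccontr)
    assume "x \<notin> C1 \<union> C2"
    then have "\<not> (+) x ` X \<subseteq> C1" "\<not> (+) x ` X \<subseteq> C2"
      using assms(1,2) X unfolding bp_closed_def by blast+
    then obtain y1 y2 where y: "y1 \<in> X" "x + y1 \<notin> C1" "y2 \<in> X" "x + y2 \<notin> C2"
      by blast
    with sub have "x + y2 \<in> C1 - C2" "x + y1 \<in> C2 - C1" by auto
    then have "2 * r < l1 (x + y2 - (x + y1))" by (rule far)
    also have "\<dots> \<le> l1 y2 + l1 (- y1)" using l1_add[of y2 "- y1"] by simp
    also have "\<dots> \<le> 2 * r"
    proof -
      have "l1 y1 \<le> r" "l1 y2 \<le> r" using r X y(1,3) by blast+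
      then show ?thesis by (simp add: l1_def)
    qed
    finally show False by simp
  qed
qed

definition smul :: "int \<Rightarrow> site \<Rightarrow> site" where
  "smul k v = (k * fst v, k * snd v)"

lemma ip_add: "ip (x + y) u = ip x u + ip y u"
  unfolding ip_def by (simp add: algebra_simps)

lemma ip_diff: "ip (x - y) u = ip x u - ip y u"
  unfolding ip_def by (simp add: algebra_simps)

lemma H_iff: "x \<in> H u \<longleftrightarrow> ip x u < 0"
  by (simp add: H_def)

lemma Hs_iff: "x \<in> Hs u a \<longleftrightarrow> ip (x - a) u < 0"
  by (simp add: Hs_def ip_def)

lemma abs_ip_le_l1:
  assumes "u \<in> S1"
  shows "\<bar>ip x u\<bar> \<le> of_int (l1 x)"
proof -
  have "(fst u)\<^sup>2 + (snd u)\<^sup>2 = 1" using assms by (simp add: S1_def)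
  then have "(fst u)\<^sup>2 \<le> 1" "(snd u)\<^sup>2 \<le> 1"
    using zero_le_power2[of "fst u"] zero_le_power2[of "snd u"] by linarith+
  then have "\<bar>fst u\<bar> \<le> 1" "\<bar>snd u\<bar> \<le> 1" by (simp_all add: abs_square_le_1)
  then have "\<bar>of_int (fst x) * fst u\<bar> \<le> \<bar>of_int (fst x)\<bar>" "\<bar>of_int (snd x) * snd u\<bar> \<le> \<bar>of_int (snd x)\<bar>"
    by (simp_all add: abs_mult mult_left_le)
  then show ?thesis unfolding ip_def l1_def by linarith
qed

lemma ip_diff_le_l1: "u \<in> S1 \<Longrightarrow> ip x u - ip y u \<le> of_int (l1 (x - y))"
  using abs_ip_le_l1[of u "x - y"] by (simp add: ip_diff)

lemma sdist_le_l1: "sdist x y \<le> of_int (l1 (x - y))"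
proof -
  let ?a = "fst x - fst y" and ?b = "snd x - snd y"
  have "of_int (?a\<^sup>2 + ?b\<^sup>2) \<le> (of_int (\<bar>?a\<bar> + \<bar>?b\<bar>) :: real)\<^sup>2"
    by (simp add: power2_eq_square algebra_simps)
  then show ?thesis unfolding sdist_def l1_def by (simp add: real_le_lsqrt)
qed

lemma l1_le_twice_norm: "of_int (l1 w) \<le> 2 * sqrt (of_int ((fst w)\<^sup>2 + (snd w)\<^sup>2))"
proof -
  have "\<bar>of_int (fst w)\<bar> \<le> sqrt (of_int ((fst w)\<^sup>2 + (snd w)\<^sup>2))"
    "\<bar>of_int (snd w)\<bar> \<le> sqrt (of_int ((fst w)\<^sup>2 + (snd w)\<^sup>2))"
    by (rule real_le_rsqrt, simp add: power2_eq_square)+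
  then show ?thesis unfolding l1_def of_int_add by linarith
qed

lemma ip_smul: "ip (smul k v) u = of_int k * ip v u"
  unfolding ip_def smul_def by (simp add: algebra_simps)

section \<open>Integral normals of rational directions\<close>

definition idot :: "site \<Rightarrow> site \<Rightarrow> int" where
  "idot x n = fst x * fst n + snd x * snd n"

lemma idot_add: "idot (x + y) n = idot x n + idot y n"
  and idot_diff: "idot (x - y) n = idot x n - idot y n"
  and idot_uminus: "idot (- x) n = - idot x n"
  and idot_smul: "idot (smul k x) n = k * idot x n"
  unfolding idot_def smul_def by (simp_all add: algebra_simps)

locale integral_normal =
  fixes u :: dir and n :: site
  assumes one_le_idot_normal: "1 \<le> idot n n"
    and ip_eq_idot: "ip x u = of_int (idot x n) / sqrt (of_int (idot n n))"

lemma rational_dir_integral_normal: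
  assumes "rational_dir u"
  obtains n where "integral_normal u n"
proof -
  obtain p q :: int where pq: "(p, q) \<noteq> (0, 0)"
    "u = (of_int p / sqrt (of_int (p^2 + q^2)), of_int q / sqrt (of_int (p^2 + q^2)))"
    using assms unfolding rational_dir_def by blast
  have "p * p + q * q \<noteq> 0" using pq(1) by (simp add: sum_squares_eq_zero_iff)
  then have "1 \<le> p * p + q * q" using sum_squares_ge_zero[of p q] by linarith
  then have "1 \<le> idot (p, q) (p, q)" by (simp add: idot_def)
  moreover have "ip x u = of_int (idot x (p, q)) / sqrt (of_int (idot (p, q) (p, q)))" for x
    unfolding ip_def idot_def pq(2) by (simp add: power2_eq_square add_divide_distrib)
  ultimately show thesis by (intro that integral_normal.intro)
qed

context integral_normal
begin

lemma sqrt_idot_normal_ge1: "1 \<le> sqrt (of_int (idot n n))"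
  using one_le_idot_normal by simp

lemma ip_less_0_iff: "ip x u < 0 \<longleftrightarrow> idot x n < 0"
  using sqrt_idot_normal_ge1 by (simp add: ip_eq_idot divide_less_0_iff)

lemma ip_eq_0_iff: "ip x u = 0 \<longleftrightarrow> idot x n = 0"
  using sqrt_idot_normal_ge1 by (simp add: ip_eq_idot)

lemma ip_normal: "ip n u = sqrt (of_int (idot n n))"
  using one_le_idot_normal by (simp add: ip_eq_idot real_div_sqrt)

lemma H_iff_idot: "x \<in> H u \<longleftrightarrow> idot x n < 0"
  by (simp add: H_iff ip_less_0_iff)

lemma normal_nonzero: "fst n \<noteq> 0 \<or> snd n \<noteq> 0"
  using one_le_idot_normal by (auto simp: idot_def)

lemma in_S1: "u \<in> S1"
proof -
  have "fst u = ip (1, 0) u" "snd u = ip (0, 1) u" by (simp_all add: ip_def)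
  then have "fst u = of_int (fst n) / sqrt (of_int (idot n n))"
    "snd u = of_int (snd n) / sqrt (of_int (idot n n))"
    by (simp_all add: ip_eq_idot idot_def)
  then show ?thesis
    using one_le_idot_normal normal_nonzero unfolding S1_def
    by (simp add: power_divide add_divide_distrib[symmetric] idot_def power2_eq_square)
qed

lemma ip_le_iff_idot: "ip x u \<le> c \<longleftrightarrow> of_int (idot x n) \<le> sqrt (of_int (idot n n)) * c"
  using sqrt_idot_normal_ge1 by (simp add: ip_eq_idot divide_le_eq mult.commute)

lemma H_translate_along_line:
  assumes "idot v n = 0"
  shows "(+) v ` H u = H u"
proof -
  have "ip v u = 0" using assms by (simp add: ip_eq_0_iff)
  then show ?thesis unfolding Hs_eq_translate[symmetric] by (auto simp: Hs_iff H_iff ip_diff)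
qed

lemma H_subset_translate:
  assumes "0 \<le> idot v n"
  shows "H u \<subseteq> (+) v ` H u"
proof -
  have "0 \<le> ip v u" using assms by (simp add: ip_less_0_iff not_less[symmetric])
  then show ?thesis unfolding Hs_eq_translate[symmetric] by (auto simp: Hs_iff H_iff ip_diff)
qed

text \<open>Write sites in the coordinates $(\langle x, n\rangle, \langle x, t\rangle)$ with $t \perp n$;
  shifting by a multiple of $t$ reduces the second coordinate modulo $\langle n, n\rangle$.\<close>
lemma exists_shift_along_line:
  "\<exists>A. \<forall>z. 0 \<le> idot z n \<and> idot z n \<le> Dm \<longrightarrow> (\<exists>v. idot v n = 0 \<and> l1 (z - v) \<le> A)"
proof -
  define P where "P = idot n n"
  define t where "t = (- snd n, fst n)"
  have t: "idot t n = 0" "idot t t = P" unfolding t_def P_def idot_def by (simp_all add: algebra_simps)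
  have coords: "P * fst x = fst n * idot x n + (- snd n) * idot x t"
    "P * snd x = snd n * idot x n + fst n * idot x t" for x
    unfolding P_def t_def idot_def by (simp_all add: algebra_simps)
  define M where "M = \<bar>Dm\<bar> + P"
  show ?thesis
  proof (rule exI, intro allI impI)
    fix z assume z: "0 \<le> idot z n \<and> idot z n \<le> Dm"
    define v where "v = smul (idot z t div P) t"
    have v: "idot v n = 0" using t by (simp add: v_def idot_smul)
    have "idot (z - v) t = idot z t mod P"
      by (simp add: v_def idot_diff idot_smul t minus_div_mult_eq_mod)
    moreover have "0 \<le> idot z t mod P" "idot z t mod P < P"
      using one_le_idot_normal unfolding P_def by simp_all
    moreover have "idot (z - v) n = idot z n" using v by (simp add: idot_diff)
    ultimately have "\<bar>idot (z - v) t\<bar> \<le> M" "\<bar>idot (z - v) n\<bar> \<le> M"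
      using z unfolding M_def by auto
    then have "\<bar>P * fst (z - v)\<bar> \<le> (\<bar>fst n\<bar> + \<bar>snd n\<bar>) * M"
      "\<bar>P * snd (z - v)\<bar> \<le> (\<bar>snd n\<bar> + \<bar>fst n\<bar>) * M"
      unfolding coords by (metis abs_lincomb_le abs_minus_cancel)+
    moreover have "\<bar>fst (z - v)\<bar> \<le> \<bar>P * fst (z - v)\<bar>" "\<bar>snd (z - v)\<bar> \<le> \<bar>P * snd (z - v)\<bar>"
      using one_le_idot_normal unfolding P_def by (simp_all add: abs_mult mult_le_cancel_right1)
    ultimately have "l1 (z - v) \<le> 2 * (\<bar>fst n\<bar> + \<bar>snd n\<bar>) * M"
      unfolding l1_def by (simp add: algebra_simps)
    with v show "\<exists>v. idot v n = 0 \<and> l1 (z - v) \<le> 2 * (\<bar>fst n\<bar> + \<bar>snd n\<bar>) * M" by blast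
  qed
qed

end

section \<open>Closed droplets\<close>

lemma S1_eq_sphere: "S1 = sphere (0 :: real \<times> real) 1"
proof -
  have "norm w = sqrt ((fst w)\<^sup>2 + (snd w)\<^sup>2)" for w :: "real \<times> real"
    by (cases w) (simp add: norm_Pair)
  then show ?thesis unfolding S1_def by (auto simp: dist_norm)
qed

lemma S1_uniform_cover:
  assumes fin: "finite SB" and cov: "\<forall>w\<in>S1. \<exists>u\<in>SB. 0 < ipr u w"
  obtains \<delta> where "0 < \<delta>" "\<forall>w\<in>S1. \<exists>u\<in>SB. \<delta> \<le> ipr u w"
proof -
  define f where "f = (\<lambda>(u :: dir, n :: nat). {w. 1 / real (Suc n) < ipr u w})"
  have "open (f c)" for c
    unfolding f_def ipr_def by (cases c) (simp, intro open_Collect_less continuous_intros)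
  moreover have "S1 \<subseteq> (\<Union>c\<in>SB \<times> UNIV. f c)"
  proof
    fix w assume "w \<in> S1"
    then obtain u where u: "u \<in> SB" "0 < ipr u w" using cov by blast
    then obtain n where "inverse (real (Suc n)) < ipr u w" using reals_Archimedean by blast
    then have "w \<in> f (u, n)" unfolding f_def by (simp add: field_simps)
    then show "w \<in> (\<Union>c\<in>SB \<times> UNIV. f c)" using u by blast
  qed
  ultimately obtain C where C: "C \<subseteq> SB \<times> UNIV" "finite C" "S1 \<subseteq> (\<Union>c\<in>C. f c)"
    using compactE_image[of S1 "SB \<times> UNIV" f] compact_sphere unfolding S1_eq_sphere by metis
  obtain M where M: "\<forall>n\<in>snd ` C. n \<le> M"
    using C(2) finite_nat_set_iff_bounded_le by blast
  have "\<exists>u\<in>SB. 1 / real (Suc M) \<le> ipr u w" if "w \<in> S1" for w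
  proof -
    obtain u n where un: "(u, n) \<in> C" "w \<in> f (u, n)" using C(3) \<open>w \<in> S1\<close> by auto
    have "1 / real (Suc M) \<le> 1 / real (Suc n)"
      using M un(1) by (force simp: frac_le)
    also have "\<dots> < ipr u w" using un(2) unfolding f_def by simp
    finally show ?thesis using un(1) C(1) by force
  qed
  then show thesis by (intro that[of "1 / real (Suc M)"]) auto
qed

lemma l1_le_of_cover:
  assumes \<delta>: "0 < \<delta>" "\<forall>w\<in>S1. \<exists>u\<in>SB. \<delta> \<le> ipr u w"
    and "0 \<le> c" and below: "\<forall>u\<in>SB. ip x u < c"
  shows "of_int (l1 x) \<le> 2 * c / \<delta>"
proof (cases "x = 0")
  case True
  then show ?thesis using assms by (simp add: l1_def)
next
  case False
  define N where "N = sqrt (of_int ((fst x)\<^sup>2 + (snd x)\<^sup>2))"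
  have "(fst x)\<^sup>2 + (snd x)\<^sup>2 \<noteq> 0"
    using False by (simp add: prod_eq_iff)
  then have "0 < (fst x)\<^sup>2 + (snd x)\<^sup>2" by (simp add: add_pos_nonneg order_le_neq_trans)
  then have N: "0 < N" unfolding N_def by (metis of_int_0_less_iff real_sqrt_gt_zero)
  have N2: "N\<^sup>2 = (of_int (fst x))\<^sup>2 + (of_int (snd x))\<^sup>2"
    unfolding N_def by simp
  define w where "w = (of_int (fst x) / N, of_int (snd x) / N)"
  have "(of_int (fst x) / N)\<^sup>2 + (of_int (snd x) / N)\<^sup>2
      = ((of_int (fst x))\<^sup>2 + (of_int (snd x))\<^sup>2) / N\<^sup>2"
    by (simp only: power_divide add_divide_distrib)
  then have "w \<in> S1" using N N2 \<open>x \<noteq> 0\<close> unfolding S1_def w_def by (simp add: prod_eq_iff)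
  then obtain u where u: "u \<in> SB" "\<delta> \<le> ipr u w" using \<delta>(2) by blast
  have "ipr u w * N = ip x u"
    using N unfolding ipr_def ip_def w_def by (simp add: field_simps)
  then have "\<delta> * N \<le> ip x u" using u(2) N by (metis mult_right_mono less_imp_le)
  also have "\<dots> < c" using below u(1) by blast
  finally have "N < c / \<delta>" using \<delta>(1) by (simp add: field_simps)
  moreover have "of_int (l1 x) \<le> 2 * N" unfolding N_def by (rule l1_le_twice_norm)
  ultimately show ?thesis by simp
qed

locale bp_family =
  fixes U :: "site set set"
  assumes update_family: "update_family U"

locale stable_cover = bp_family U for U +
  fixes SB :: "dir set"
  assumes finite_SB: "finite SB"
    and SB_rational_stable: "\<forall>u\<in>SB. rational_dir u \<and> stable U u"
    and SB_cover: "\<forall>w\<in>S1. \<exists>u\<in>SB. 0 < ipr u w"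

lemma (in stable_cover) SB_outward_vectors:
  obtains v V where "\<forall>u\<in>SB. 1 \<le> ip (v u) u" "0 < V" "\<forall>u\<in>SB. ip (v u) u \<le> V"
proof -
  have "\<forall>u\<in>SB. \<exists>v. 1 \<le> ip v u"
  proof
    fix u assume "u \<in> SB"
    then obtain n where "integral_normal u n" using SB_rational_stable rational_dir_integral_normal by blast
    then interpret integral_normal u n .
    have "1 \<le> ip n u" unfolding ip_normal by (rule sqrt_idot_normal_ge1)
    then show "\<exists>v. 1 \<le> ip v u" ..
  qed
  then obtain v where v: "\<forall>u\<in>SB. 1 \<le> ip (v u) u" by (rule bchoice[THEN exE])
  obtain V0 where "\<forall>u\<in>SB. ip (v u) u \<le> V0"
    using finite_bounded_above[OF finite_SB, of "\<lambda>u. ip (v u) u"] by blast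
  define V where "V = max V0 1"
  then have V: "0 < V" "\<forall>u\<in>SB. ip (v u) u \<le> V"
    using \<open>\<forall>u\<in>SB. ip (v u) u \<le> V0\<close> by auto
  then show thesis using v that by blast
qed

lemma (in stable_cover) bp_closed_droplet_around:
  obtains C :: real where "0 < C"
    "\<And>z0 k. 0 \<le> k \<Longrightarrow> \<exists>D. bp_closed U D \<and> (\<forall>z. l1 (z - z0) < k \<longrightarrow> z \<in> D)
        \<and> (\<forall>x\<in>D. of_int (l1 (x - z0)) \<le> C * of_int k)"
proof -
  obtain \<delta> where \<delta>: "0 < \<delta>" "\<forall>w\<in>S1. \<exists>u\<in>SB. \<delta> \<le> ipr u w"
    using S1_uniform_cover[OF finite_SB SB_cover] by blast
  obtain v V where v: "\<forall>u\<in>SB. 1 \<le> ip (v u) u" and V: "0 < V" "\<forall>u\<in>SB. ip (v u) u \<le> V"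
    by (rule SB_outward_vectors)
  have S1: "u \<in> S1" if "u \<in> SB" for u using SB_rational_stable that unfolding stable_def by blast
  show thesis
  proof (rule that)
    show "0 < 2 * V / \<delta>" using V(1) \<delta>(1) by simp
    fix z0 and k :: int assume k: "0 \<le> k"
    define D where "D = (\<Inter>u\<in>SB. Hs u (z0 + smul k (v u)))"
    have "bp_closed U D"
      unfolding D_def by (rule bp_closed_INT) (use SB_rational_stable stable_bp_closed_Hs[OF update_family] in blast)
    moreover have "z \<in> D" if z: "l1 (z - z0) < k" for z
      unfolding D_def
    proof
      fix u assume u: "u \<in> SB"
      have "of_int k \<le> of_int k * ip (v u) u" using v u k by (simp add: mult_le_cancel_left1)
      moreover have "ip (z - z0) u \<le> of_int (l1 (z - z0))"
        using abs_ip_le_l1[OF S1[OF u]] by (rule abs_le_D1)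
      ultimately have "ip (z - (z0 + smul k (v u))) u < 0"
        using z by (simp add: ip_diff ip_add ip_smul)
      then show "z \<in> Hs u (z0 + smul k (v u))" by (simp add: Hs_iff)
    qed
    moreover have "of_int (l1 (x - z0)) \<le> 2 * V / \<delta> * of_int k" if x: "x \<in> D" for x
    proof -
      have "ip (x - z0) u < of_int k * V" if u: "u \<in> SB" for u
      proof -
        have "x \<in> Hs u (z0 + smul k (v u))" using x u unfolding D_def by blast
        then have "ip (x - (z0 + smul k (v u))) u < 0" by (simp only: Hs_iff)
        then have "ip (x - z0) u < of_int k * ip (v u) u" by (simp add: ip_diff ip_add ip_smul)
        also have "\<dots> \<le> of_int k * V" using V(2) u k by (simp add: mult_left_mono)
        finally show ?thesis .
      qed
      moreover have "0 \<le> of_int k * V" using k V(1) by simp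
      ultimately have "of_int (l1 (x - z0)) \<le> 2 * (of_int k * V) / \<delta>"
        using l1_le_of_cover[OF \<delta>] by blast
      then show ?thesis by (simp add: field_simps)
    qed
    ultimately show "\<exists>D. bp_closed U D \<and> (\<forall>z. l1 (z - z0) < k \<longrightarrow> z \<in> D)
        \<and> (\<forall>x\<in>D. of_int (l1 (x - z0)) \<le> 2 * V / \<delta> * of_int k)" by blast
  qed
qed

section \<open>Finite sets split into well-separated parts or form a cluster\<close>

lemma l1_relpow_le:
  assumes "(a, b) \<in> R ^^ m" and step: "\<And>a b. (a, b) \<in> R \<Longrightarrow> l1 (b - a) \<le> T"
  shows "l1 (b - a) \<le> int m * T"
  using assms(1)
proof (induction m arbitrary: b)
  case (Suc m)
  then obtain c where "(a, c) \<in> R ^^ m" "(c, b) \<in> R" by (blast elim: relpow_Suc_E)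
  then have "l1 (c - a) \<le> int m * T" "l1 (b - c) \<le> T" using Suc.IH step by auto
  then show ?case using l1_triangle[of b a c] by (simp add: algebra_simps)
qed (simp add: l1_def)

lemma l1_rtrancl_le:
  assumes R: "R \<subseteq> Z \<times> Z" and "finite Z" "0 \<le> T"
    and step: "\<And>a b. (a, b) \<in> R \<Longrightarrow> l1 (b - a) \<le> T" and "(a, b) \<in> R\<^sup>*"
  shows "l1 (b - a) \<le> int (card Z * card Z) * T"
proof -
  have "finite R" using R \<open>finite Z\<close> by (simp add: finite_subset)
  have "card R \<le> card Z * card Z"
    using card_mono[OF _ R] \<open>finite Z\<close> by (simp add: card_cartesian_product)
  obtain m where "m \<le> card R" "(a, b) \<in> R ^^ m"
    using rtrancl_finite_eq_relpow[OF \<open>finite R\<close>] \<open>(a, b) \<in> R\<^sup>*\<close> by blast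
  from \<open>(a, b) \<in> R ^^ m\<close> step have "l1 (b - a) \<le> int m * T" by (rule l1_relpow_le)
  also have "\<dots> \<le> int (card Z * card Z) * T"
    using \<open>m \<le> card R\<close> \<open>card R \<le> card Z * card Z\<close> \<open>0 \<le> T\<close>
    by (intro mult_right_mono) (simp_all only: of_nat_le_iff)
  finally show ?thesis .
qed

lemma finite_gap_or_cluster:
  fixes Z :: "site set" and T :: int
  assumes fin: "finite Z" and z0: "z0 \<in> Z" and T: "0 \<le> T"
  shows "(\<exists>K. K \<subseteq> Z \<and> K \<noteq> {} \<and> K \<noteq> Z \<and> (\<forall>k\<in>K. \<forall>k'\<in>Z - K. T < l1 (k - k')))
    \<or> (\<forall>z\<in>Z. l1 (z - z0) \<le> int (card Z * card Z) * T)"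
proof -
  define R where "R = {(a, b). a \<in> Z \<and> b \<in> Z \<and> l1 (b - a) \<le> T}"
  define K where "K = R\<^sup>* `` {z0}"
  have R: "R \<subseteq> Z \<times> Z" unfolding R_def by auto
  have "K \<subseteq> Z"
  proof
    fix z assume "z \<in> K"
    then have "(z0, z) \<in> R\<^sup>*" unfolding K_def by simp
    then show "z \<in> Z" by (induction rule: rtrancl_induct) (use z0 R in auto)
  qed
  show ?thesis
  proof (cases "K = Z")
    case True
    have "l1 (z - z0) \<le> int (card Z * card Z) * T" if "z \<in> Z" for z
      using that True unfolding K_def
      by (intro l1_rtrancl_le[OF R fin T]) (auto simp: R_def)
    then show ?thesis by blast
  next
    case False
    have "T < l1 (k - k')" if "k \<in> K" "k' \<in> Z - K" for k k'
    proof (rule ccontr)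
      assume "\<not> T < l1 (k - k')"
      then have "(k, k') \<in> R"
        using that \<open>K \<subseteq> Z\<close> l1_minus_commute[of k k'] unfolding R_def by auto
      then have "k' \<in> K" using \<open>k \<in> K\<close> unfolding K_def by (auto intro: rtrancl_into_rtrancl)
      then show False using that by blast
    qed
    moreover have "z0 \<in> K" unfolding K_def by simp
    ultimately show ?thesis using False \<open>K \<subseteq> Z\<close> by blast
  qed
qed

section \<open>Sites infected from a half-plane and a few extra sites\<close>

definition halfplane_spread_le :: "site set set \<Rightarrow> dir \<Rightarrow> nat \<Rightarrow> int \<Rightarrow> bool" where
  "halfplane_spread_le U u m R \<longleftrightarrow> (\<forall>Z. finite Z \<and> card Z \<le> m \<longrightarrow>
     (\<forall>y \<in> bp_closure U (H u \<union> Z) - H u. \<exists>z\<in>Z. l1 (y - z) \<le> R))"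

lemma halfplane_spread_le_mono:
  "halfplane_spread_le U u m R \<Longrightarrow> m' \<le> m \<Longrightarrow> R \<le> R' \<Longrightarrow> halfplane_spread_le U u m' R'"
  unfolding halfplane_spread_le_def by (meson order_trans)

text \<open>If $Z$ splits into two parts that are far apart compared to $R$, the two closures
  $[\mathbb H_u \cup K]$ and $[\mathbb H_u \cup (Z - K)]$ cannot interact, so their union is
  already closed.\<close>
lemma halfplane_spread_split:
  assumes uf: "update_family U" and r: "\<forall>X\<in>U. \<forall>v\<in>X. l1 v \<le> r"
    and spread: "halfplane_spread_le U u m R"
    and Z: "finite Z" "K \<subseteq> Z" "card K \<le> m" "card (Z - K) \<le> m"
    and gap: "\<forall>k\<in>K. \<forall>k'\<in>Z - K. 2 * R + 2 * r < l1 (k - k')"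
  shows "\<forall>y \<in> bp_closure U (H u \<union> Z) - H u. \<exists>z\<in>Z. l1 (y - z) \<le> R"
proof -
  define C1 where "C1 = bp_closure U (H u \<union> K)"
  define C2 where "C2 = bp_closure U (H u \<union> (Z - K))"
  have "finite K" "finite (Z - K)" using Z finite_subset by auto
  then have near1: "\<forall>y\<in>C1 - H u. \<exists>z\<in>K. l1 (y - z) \<le> R"
    and near2: "\<forall>y\<in>C2 - H u. \<exists>z\<in>Z - K. l1 (y - z) \<le> R"
    using spread Z(3,4) unfolding halfplane_spread_le_def C1_def C2_def by blast+
  have H: "H u \<union> K \<subseteq> C1" "H u \<union> (Z - K) \<subseteq> C2"
    unfolding C1_def C2_def by (rule subset_bp_closure)+
  have "bp_closed U (C1 \<union> C2)"
  proof (rule bp_closed_Un_far[OF _ _ r])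
    show "bp_closed U C1" "bp_closed U C2"
      unfolding C1_def C2_def by (rule bp_closed_bp_closure[OF uf])+
    fix p q assume "p \<in> C1 - C2" "q \<in> C2 - C1"
    then have "p \<in> C1 - H u" "q \<in> C2 - H u" using H by auto
    then obtain k k' where k: "k \<in> K" "l1 (p - k) \<le> R" and k': "k' \<in> Z - K" "l1 (q - k') \<le> R"
      using near1 near2 by blast
    have "l1 (k - k') \<le> l1 (p - k) + l1 (p - q) + l1 (q - k')"
      using l1_triangle[of k k' p] l1_triangle[of p k' q] l1_minus_commute[of k p] by linarith
    moreover have "2 * R + 2 * r < l1 (k - k')" using gap k(1) k'(1) by blast
    ultimately show "2 * r < l1 (p - q)" using k(2) k'(2) by linarith
  qed
  moreover have "H u \<union> Z \<subseteq> C1 \<union> C2" using H by blast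
  ultimately have "bp_closure U (H u \<union> Z) \<subseteq> C1 \<union> C2" by (rule bp_closure_least)
  then show ?thesis using near1 near2 Z(2) by blast
qed

lemma bp_closure_H_Un_far:
  assumes uf: "update_family U" and st: "stable U u" and r: "\<forall>X\<in>U. \<forall>v\<in>X. l1 v \<le> r"
    and D: "bp_closed U D" "Z \<subseteq> D" and far: "\<forall>x\<in>D. 2 * of_int r < ip x u"
  shows "bp_closure U (H u \<union> Z) \<subseteq> H u \<union> D"
proof (rule bp_closure_least)
  have "u \<in> S1" using st unfolding stable_def by simp
  show "bp_closed U (H u \<union> D)"
  proof (rule bp_closed_Un_far[OF stable_bp_closed[OF uf st] D(1) r])
    fix p q assume "p \<in> H u - D" "q \<in> D - H u"
    then have "ip p u < 0" "2 * of_int r < ip q u" using far by (auto simp: H_iff)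
    moreover have "ip q u - ip p u \<le> of_int (l1 (q - p))" by (rule ip_diff_le_l1[OF \<open>u \<in> S1\<close>])
    ultimately show "2 * r < l1 (p - q)" using l1_minus_commute[of p q] by linarith
  qed
  show "H u \<union> Z \<subseteq> H u \<union> D" using D(2) by blast
qed

definition line_finite :: "site set set \<Rightarrow> dir \<Rightarrow> nat \<Rightarrow> bool" where
  "line_finite U u m \<longleftrightarrow>
     (\<forall>Z. finite Z \<and> card Z \<le> m \<longrightarrow> finite (bp_closure U (H u \<union> Z) \<inter> {x. ip x u = 0}))"

lemma line_finite_if_alpha_bar:
  assumes "enat (Suc m) \<le> alpha_bar U u"
  shows "line_finite U u m"
  unfolding line_finite_def
proof (intro allI impI)
  fix Z :: "site set" assume Z: "finite Z \<and> card Z \<le> m"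
  have side: "finite (bp_closure U (H u \<union> Z) \<inter> L)" if "enat (Suc m) \<le> alpha_side U L u" for L
  proof (rule ccontr)
    assume "infinite (bp_closure U (H u \<union> Z) \<inter> L)"
    then have "alpha_side U L u \<le> enat (card Z)"
      using Z unfolding alpha_side_def by (blast intro: Inf_lower)
    then have "enat (Suc m) \<le> enat (card Z)" by (rule order_trans[OF that])
    then show False using Z by simp
  qed
  have "lplus u \<union> lminus u = {x. ip x u = 0}" unfolding lplus_def lminus_def by auto
  then show "finite (bp_closure U (H u \<union> Z) \<inter> {x. ip x u = 0})"
    using side[of "lplus u"] side[of "lminus u"] assms
    unfolding alpha_bar_def alpha_plus_def alpha_minus_def by (metis Int_Un_distrib finite_Un min.boundedE)
qed

lemma line_finite_mono: "line_finite U u m \<Longrightarrow> m' \<le> m \<Longrightarrow> line_finite U u m'"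
  unfolding line_finite_def by auto

locale stable_normal = bp_family U + integral_normal u n for U u n +
  assumes stable: "stable U u"
begin

text \<open>Translating by a site on the level line reduces it to the line $\ell_u$ through the
  origin.\<close>
lemma finite_bp_closure_level:
  assumes lf: "line_finite U u m" and W: "finite W" "card W \<le> m" and c: "0 \<le> c"
  shows "finite {x \<in> bp_closure U (H u \<union> W). idot x n = c}"
proof (cases "{x \<in> bp_closure U (H u \<union> W). idot x n = c} = {}")
  case False
  then obtain x0 where x0: "idot x0 n = c" by blast
  define W' where "W' = (+) (- x0) ` W"
  have "H u \<union> W \<subseteq> (+) x0 ` (H u \<union> W')"
    using H_subset_translate[of x0] x0 c unfolding W'_def by (auto simp: image_image image_Un)
  then have "bp_closure U (H u \<union> W) \<subseteq> (+) x0 ` bp_closure U (H u \<union> W')"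
    using bp_closure_mono[OF update_family] bp_closure_translate[OF update_family] by metis
  then have "{x \<in> bp_closure U (H u \<union> W). idot x n = c}
      \<subseteq> (+) x0 ` (bp_closure U (H u \<union> W') \<inter> {x. ip x u = 0})"
    using x0 by (force simp: ip_eq_0_iff idot_add)
  moreover have "finite W'" "card W' \<le> m"
    using W card_translate[of "- x0" W] unfolding W'_def by simp_all
  with lf have "finite (bp_closure U (H u \<union> W') \<inter> {x. ip x u = 0})"
    unfolding line_finite_def by blast
  ultimately show ?thesis by (meson finite_subset finite_imageI)
next
  case True
  then show ?thesis by (metis finite.emptyI)
qed

lemma bp_closure_idot_bounded:
  assumes "finite W"
  obtains K where "\<forall>x \<in> bp_closure U (H u \<union> W). idot x n < K"
proof -
  obtain K0 where K0: "\<forall>w\<in>W. idot w n \<le> K0"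
    using finite_bounded_above[OF assms, of "\<lambda>w. idot w n"] by blast
  define b where "b = smul (max K0 0 + 1) n"
  have "(max K0 0 + 1) * 1 \<le> (max K0 0 + 1) * idot n n"
    using one_le_idot_normal by (intro mult_left_mono) simp_all
  then have b: "max K0 0 + 1 \<le> idot b n" by (simp add: b_def idot_smul)
  have "H u \<union> W \<subseteq> Hs u b"
  proof
    fix x assume "x \<in> H u \<union> W"
    then have "idot x n < idot b n" using K0 b by (auto simp: H_iff_idot)
    then show "x \<in> Hs u b" by (simp add: Hs_iff ip_less_0_iff idot_diff)
  qed
  then have "bp_closure U (H u \<union> W) \<subseteq> Hs u b"
    by (rule bp_closure_least[OF stable_bp_closed_Hs[OF update_family stable]])
  then show thesis
    by (intro that[of "idot b n"]) (auto simp: Hs_iff ip_less_0_iff idot_diff)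
qed

lemma finite_bp_closure_diff_H:
  assumes "line_finite U u m" "finite W" "card W \<le> m"
  shows "finite (bp_closure U (H u \<union> W) - H u)"
proof -
  obtain K where K: "\<forall>x \<in> bp_closure U (H u \<union> W). idot x n < K"
    using bp_closure_idot_bounded[OF assms(2)] by blast
  have "bp_closure U (H u \<union> W) - H u
      \<subseteq> (\<Union>c\<in>{0..<K}. {x \<in> bp_closure U (H u \<union> W). idot x n = c})"
    using K by (auto simp: H_iff_idot)
  moreover have "finite (\<Union>c\<in>{0..<K}. {x \<in> bp_closure U (H u \<union> W). idot x n = c})"
    using finite_bp_closure_level[OF assms] by simp
  ultimately show ?thesis by (rule finite_subset)
qed

lemma bp_closure_diff_H_l1_bounded:
  assumes lf: "line_finite U u m"
  obtains M where "\<And>W y. W \<subseteq> {x. l1 x \<le> B} \<Longrightarrow> card W \<le> m \<Longrightarrow>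
    y \<in> bp_closure U (H u \<union> W) - H u \<Longrightarrow> l1 y \<le> M"
proof -
  define Fam where "Fam = {W. W \<subseteq> {x. l1 x \<le> B} \<and> card W \<le> m}"
  have "Fam \<subseteq> Pow {x. l1 x \<le> B}" unfolding Fam_def by blast
  then have "finite Fam" using finite_l1_ball by (simp add: finite_subset)
  moreover have "finite (bp_closure U (H u \<union> W) - H u)" if "W \<in> Fam" for W
    using that finite_subset[OF _ finite_l1_ball] finite_bp_closure_diff_H[OF lf]
    unfolding Fam_def by blast
  ultimately have "finite (\<Union>W\<in>Fam. bp_closure U (H u \<union> W) - H u)" by blast
  then obtain M where "\<forall>y \<in> (\<Union>W\<in>Fam. bp_closure U (H u \<union> W) - H u). l1 y \<le> M"
    using finite_bounded_above[of _ l1] by blast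
  then show thesis by (intro that[of M]) (auto simp: Fam_def)
qed

lemma halfplane_spread_leI:
  assumes "\<And>Z y. finite Z \<Longrightarrow> card Z \<le> m \<Longrightarrow> Z \<noteq> {} \<Longrightarrow> Z \<inter> H u = {} \<Longrightarrow>
    y \<in> bp_closure U (H u \<union> Z) - H u \<Longrightarrow> \<exists>z\<in>Z. l1 (y - z) \<le> R"
  shows "halfplane_spread_le U u m R"
  unfolding halfplane_spread_le_def
proof (intro allI impI ballI)
  fix Z y assume Z: "finite Z \<and> card Z \<le> m" and y: "y \<in> bp_closure U (H u \<union> Z) - H u"
  define Z0 where "Z0 = Z - H u"
  have "H u \<union> Z0 = H u \<union> Z" unfolding Z0_def by blast
  then have y0: "y \<in> bp_closure U (H u \<union> Z0) - H u" using y by simp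
  moreover have "finite Z0" "card Z0 \<le> m"
    using Z card_mono[of Z Z0] unfolding Z0_def by auto
  moreover have "Z0 \<noteq> {}" using y0 stable unfolding stable_def by auto
  moreover have "Z0 \<inter> H u = {}" unfolding Z0_def by blast
  ultimately have "\<exists>z\<in>Z0. l1 (y - z) \<le> R" using assms by blast
  then show "\<exists>z\<in>Z. l1 (y - z) \<le> R" unfolding Z0_def by blast
qed

text \<open>Up to a translation along the line $\ell_u$, a configuration near $\ell_u$ is one of
  finitely many, and each of them infects only finitely many sites outside $\mathbb H_u$.\<close>
lemma halfplane_spread_near:
  assumes lf: "line_finite U u m"
  obtains R where "\<And>Z z1 y. finite Z \<Longrightarrow> card Z \<le> m \<Longrightarrow> 0 \<le> ip z1 u \<Longrightarrow> ip z1 u \<le> TH \<Longrightarrow>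
    \<forall>z\<in>Z. l1 (z - z1) \<le> L \<Longrightarrow> y \<in> bp_closure U (H u \<union> Z) - H u \<Longrightarrow> l1 (y - z1) \<le> R"
proof -
  obtain A where A: "\<forall>z. 0 \<le> idot z n \<and> idot z n \<le> \<lceil>sqrt (of_int (idot n n)) * TH\<rceil>
      \<longrightarrow> (\<exists>v. idot v n = 0 \<and> l1 (z - v) \<le> A)"
    using exists_shift_along_line by blast
  obtain M where M: "\<And>W y. W \<subseteq> {x. l1 x \<le> L + A} \<Longrightarrow> card W \<le> m \<Longrightarrow>
      y \<in> bp_closure U (H u \<union> W) - H u \<Longrightarrow> l1 y \<le> M"
    using bp_closure_diff_H_l1_bounded[OF lf] by blast
  show thesis
  proof (rule that)
    fix Z z1 y
    assume Z: "finite Z" "card Z \<le> m" and z1: "0 \<le> ip z1 u" "ip z1 u \<le> TH"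
      and near: "\<forall>z\<in>Z. l1 (z - z1) \<le> L" and y: "y \<in> bp_closure U (H u \<union> Z) - H u"
    have "of_int (idot z1 n) \<le> sqrt (of_int (idot n n)) * TH"
      using z1(2) by (simp only: ip_le_iff_idot)
    then have "idot z1 n \<le> \<lceil>sqrt (of_int (idot n n)) * TH\<rceil>"
      by (meson le_of_int_ceiling of_int_le_iff order_trans)
    moreover have "0 \<le> idot z1 n" using z1(1) by (simp add: ip_less_0_iff not_less[symmetric])
    ultimately obtain v where v: "idot v n = 0" "l1 (z1 - v) \<le> A" using A by blast
    define Z' where "Z' = (+) (- v) ` Z"
    have shift: "(+) (- v) ` (H u \<union> Z) = H u \<union> Z'"
      using H_translate_along_line[of "- v"] v(1) unfolding Z'_def by (simp add: image_Un idot_uminus)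
    have "- v + y \<in> (+) (- v) ` bp_closure U (H u \<union> Z)" using y by blast
    also have "\<dots> = bp_closure U (H u \<union> Z')"
      unfolding shift[symmetric] by (rule bp_closure_translate[OF update_family, symmetric])
    finally have "- v + y \<in> bp_closure U (H u \<union> Z')" .
    moreover have "- v + y \<notin> H u" using y v(1) by (simp add: H_iff_idot idot_add idot_diff idot_uminus)
    moreover have "Z' \<subseteq> {x. l1 x \<le> L + A}"
    proof
      fix x assume "x \<in> Z'"
      then obtain z where z: "z \<in> Z" "x = - v + z" unfolding Z'_def by blast
      then have "l1 (z - z1) \<le> L" using near by blast
      then have "l1 (z - v) \<le> L + A" using l1_triangle[of z v z1] v(2) by linarith
      then show "x \<in> {x. l1 x \<le> L + A}" using z(2) by (simp add: add.commute)
    qed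
    moreover have "card Z' \<le> m" using Z card_translate[of "- v" Z] unfolding Z'_def by simp
    ultimately have "l1 (- v + y) \<le> M" using M by blast
    then have "l1 (y - v) \<le> M" by (simp add: algebra_simps)
    then show "l1 (y - z1) \<le> M + A"
      using l1_triangle[of y z1 v] l1_minus_commute[of z1 v] v(2) by linarith
  qed
qed

end

locale halfplane_cover = stable_normal U u n + stable_cover U SB for U u n SB
begin

text \<open>A cluster around $z_0$ either lies close to $\ell_u$, or lies far from $\mathbb H_u$; in the
  latter case a closed droplet around the cluster separates it from $\mathbb H_u$.\<close>
lemma halfplane_spread_cluster:
  assumes lf: "line_finite U u m" and r: "\<forall>X\<in>U. \<forall>v\<in>X. l1 v \<le> r" and "0 \<le> L"
  obtains R where "\<And>Z z0 y. finite Z \<Longrightarrow> card Z \<le> m \<Longrightarrow> z0 \<notin> H u \<Longrightarrow>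
    \<forall>z\<in>Z. l1 (z - z0) < L \<Longrightarrow> y \<in> bp_closure U (H u \<union> Z) - H u \<Longrightarrow> l1 (y - z0) \<le> R"
proof -
  obtain C :: real where "0 < C" and C: "\<And>z0 k. 0 \<le> k \<Longrightarrow> \<exists>D. bp_closed U D
      \<and> (\<forall>z. l1 (z - z0) < k \<longrightarrow> z \<in> D) \<and> (\<forall>x\<in>D. of_int (l1 (x - z0)) \<le> C * of_int k)"
    using bp_closed_droplet_around by blast
  define TH where "TH = C * of_int L + 2 * of_int r"
  obtain Rn where Rn: "\<And>Z z1 y. finite Z \<Longrightarrow> card Z \<le> m \<Longrightarrow> 0 \<le> ip z1 u \<Longrightarrow> ip z1 u \<le> TH \<Longrightarrow>
    \<forall>z\<in>Z. l1 (z - z1) \<le> L \<Longrightarrow> y \<in> bp_closure U (H u \<union> Z) - H u \<Longrightarrow> l1 (y - z1) \<le> Rn"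
    using halfplane_spread_near[OF lf, where TH = TH and L = L] by blast
  show thesis
  proof (rule that[of "max Rn \<lceil>C * of_int L\<rceil>"])
    fix Z z0 y
    assume Z: "finite Z" "card Z \<le> m" and z0: "z0 \<notin> H u"
      and near: "\<forall>z\<in>Z. l1 (z - z0) < L" and y: "y \<in> bp_closure U (H u \<union> Z) - H u"
    show "l1 (y - z0) \<le> max Rn \<lceil>C * of_int L\<rceil>"
    proof (cases "ip z0 u \<le> TH")
      case True
      have "0 \<le> ip z0 u" using z0 by (simp add: H_iff not_less)
      moreover have "\<forall>z\<in>Z. l1 (z - z0) \<le> L" using near by (simp add: order_less_imp_le)
      ultimately have "l1 (y - z0) \<le> Rn" by (rule Rn[OF Z _ True _ y])
      then show ?thesis by simp
    next
      case False
      obtain D where D: "bp_closed U D" "\<forall>z. l1 (z - z0) < L \<longrightarrow> z \<in> D"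
        "\<forall>x\<in>D. of_int (l1 (x - z0)) \<le> C * of_int L"
        using C[OF \<open>0 \<le> L\<close>] by blast
      have "\<forall>x\<in>D. 2 * of_int r < ip x u"
      proof
        fix x assume "x \<in> D"
        have "ip z0 u - ip x u \<le> of_int (l1 (x - z0))"
          using ip_diff_le_l1[OF in_S1, of z0 x] l1_minus_commute[of z0 x] by simp
        moreover have "of_int (l1 (x - z0)) \<le> C * of_int L" using D(3) \<open>x \<in> D\<close> by blast
        ultimately show "2 * of_int r < ip x u" using False unfolding TH_def by linarith
      qed
      moreover have "Z \<subseteq> D" using near D(2) by blast
      ultimately have "bp_closure U (H u \<union> Z) \<subseteq> H u \<union> D"
        by (intro bp_closure_H_Un_far[OF update_family stable r D(1)])
      then have "y \<in> D" using y by blast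
      then have "of_int (l1 (y - z0)) \<le> C * of_int L" using D(3) by blast
      then have "l1 (y - z0) \<le> \<lceil>C * of_int L\<rceil>"
        by (meson le_of_int_ceiling of_int_le_iff order_trans)
      then show ?thesis by simp
    qed
  qed
qed

lemma halfplane_spread_Suc:
  assumes lf: "line_finite U u (Suc m)" and spread: "halfplane_spread_le U u m R" and "0 \<le> R"
  shows "\<exists>R'. halfplane_spread_le U u (Suc m) R'"
proof -
  obtain r where r: "0 \<le> r" "\<forall>X\<in>U. \<forall>v\<in>X. l1 v \<le> r"
    using update_family_radius[OF update_family] by blast
  define T where "T = 2 * R + 2 * r"
  define L where "L = int (Suc m * Suc m) * T + 1"
  have "0 \<le> T" "0 \<le> L" using r(1) \<open>0 \<le> R\<close> unfolding T_def L_def by simp_all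
  obtain Rc where Rc: "\<And>Z z0 y. finite Z \<Longrightarrow> card Z \<le> Suc m \<Longrightarrow> z0 \<notin> H u \<Longrightarrow>
    \<forall>z\<in>Z. l1 (z - z0) < L \<Longrightarrow> y \<in> bp_closure U (H u \<union> Z) - H u \<Longrightarrow> l1 (y - z0) \<le> Rc"
    using halfplane_spread_cluster[OF lf r(2) \<open>0 \<le> L\<close>] by blast
  have "halfplane_spread_le U u (Suc m) (max R Rc)"
  proof (rule halfplane_spread_leI)
    fix Z0 y assume Z0: "finite Z0" "card Z0 \<le> Suc m" "Z0 \<noteq> {}" "Z0 \<inter> H u = {}"
      and y0: "y \<in> bp_closure U (H u \<union> Z0) - H u"
    then obtain z0 where "z0 \<in> Z0" by blast
    from finite_gap_or_cluster[OF Z0(1) this \<open>0 \<le> T\<close>]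
    show "\<exists>z\<in>Z0. l1 (y - z) \<le> max R Rc"
    proof
      assume "\<exists>K. K \<subseteq> Z0 \<and> K \<noteq> {} \<and> K \<noteq> Z0 \<and> (\<forall>k\<in>K. \<forall>k'\<in>Z0 - K. T < l1 (k - k'))"
      then obtain K where K: "K \<subseteq> Z0" "K \<noteq> {}" "K \<noteq> Z0"
        and gap: "\<forall>k\<in>K. \<forall>k'\<in>Z0 - K. 2 * R + 2 * r < l1 (k - k')"
        unfolding T_def by blast
      have "card K < card Z0" "card (Z0 - K) < card Z0"
        using K Z0(1) by (auto intro: psubset_card_mono)
      then have "card K \<le> m" "card (Z0 - K) \<le> m" using Z0(2) by simp_all
      then have "\<exists>z\<in>Z0. l1 (y - z) \<le> R"
        using halfplane_spread_split[OF update_family r(2) spread Z0(1) K(1) _ _ gap] y0 by blast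
      then show ?thesis by (meson max.coboundedI1)
    next
      assume cluster: "\<forall>z\<in>Z0. l1 (z - z0) \<le> int (card Z0 * card Z0) * T"
      have "int (card Z0 * card Z0) * T \<le> int (Suc m * Suc m) * T"
        using mult_le_mono[OF Z0(2) Z0(2)] \<open>0 \<le> T\<close>
        by (intro mult_right_mono) (simp_all only: of_nat_le_iff)
      then have "\<forall>z\<in>Z0. l1 (z - z0) < L" using cluster unfolding L_def by fastforce
      moreover have "z0 \<notin> H u" using \<open>z0 \<in> Z0\<close> Z0(4) by blast
      ultimately have "l1 (y - z0) \<le> Rc" using Rc[OF Z0(1,2)] y0 by blast
      then show ?thesis using \<open>z0 \<in> Z0\<close> by (meson max.coboundedI2)
    qed
  qed
  then show ?thesis ..
qed

lemma halfplane_spread_bounded: "line_finite U u m \<Longrightarrow> \<exists>R. halfplane_spread_le U u m R"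
proof (induction m)
  case 0
  have "bp_closure U (H u \<union> Z) - H u = {}" if "finite Z" "card Z \<le> 0" for Z
    using that stable unfolding stable_def by simp
  then have "halfplane_spread_le U u 0 0" unfolding halfplane_spread_le_def by blast
  then show ?case ..
next
  case (Suc m)
  then obtain R where "halfplane_spread_le U u m R" using line_finite_mono by fastforce
  then have "halfplane_spread_le U u m (max R 0)" by (rule halfplane_spread_le_mono) simp_all
  then show ?case using halfplane_spread_Suc[OF Suc.prems] by simp
qed

end

lemma setdist_translate: "setdist (v + x) ((+) v ` Y) = setdist x Y"
proof -
  have "sdist (v + x) (v + y) = sdist x y" for y unfolding sdist_def by simp
  then show ?thesis unfolding Defs.setdist_def image_image by simp
qed

lemma setdist_le_rho:
  assumes spread: "\<forall>u\<in>SB. halfplane_spread_le U u (a - 1) R"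
    and u: "u \<in> SB" and Z: "finite Z" "card Z = a - 1" and y: "y \<in> bp_closure U (H u \<union> Z) - H u"
  shows "setdist y Z \<le> rho U SB a"
proof -
  define S where "S = {setdist y Z | u Z y. u \<in> SB \<and> finite Z \<and> card Z = a - 1 \<and>
    y \<in> bp_closure U (H u \<union> Z) - H u}"
  have "s \<le> of_int R" if "s \<in> S" for s
  proof -
    obtain u Z y where h: "s = setdist y Z" "u \<in> SB" "finite Z" "card Z = a - 1"
      "y \<in> bp_closure U (H u \<union> Z) - H u"
      using \<open>s \<in> S\<close> unfolding S_def by blast
    then obtain z where z: "z \<in> Z" "l1 (y - z) \<le> R"
      using spread unfolding halfplane_spread_le_def by (metis order_refl)
    have "setdist y Z \<le> sdist y z" unfolding Defs.setdist_def using h(3) z(1) by simp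
    also have "\<dots> \<le> of_int R" using sdist_le_l1[of y z] z(2) by linarith
    finally show ?thesis using h(1) by simp
  qed
  then have "bdd_above S" by (rule bdd_aboveI)
  moreover have "setdist y Z \<in> S" unfolding S_def using u Z y by blast
  ultimately show ?thesis unfolding rho_def S_def[symmetric] by (rule cSup_upper[rotated])
qed

lemma bp_closure_Un_subset_translate:
  assumes "update_family U" "D \<subseteq> Hs u a"
  shows "bp_closure U (D \<union> Y) \<subseteq> (+) a ` bp_closure U (H u \<union> (+) (- a) ` Y)"
proof -
  have "D \<union> Y \<subseteq> (+) a ` (H u \<union> (+) (- a) ` Y)"
    using assms(2) unfolding Hs_eq_translate by (auto simp: image_image image_Un)
  then have "bp_closure U (D \<union> Y) \<subseteq> bp_closure U ((+) a ` (H u \<union> (+) (- a) ` Y))"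
    by (rule bp_closure_mono[OF assms(1)])
  then show ?thesis unfolding bp_closure_translate[OF assms(1)] .
qed

lemma setdist_Un_far:
  assumes "finite Y" "Y \<noteq> {}" "finite P" and far: "\<forall>p\<in>P. \<forall>y\<in>Y. sdist x y \<le> sdist x p"
  shows "setdist x (Y \<union> P) = setdist x Y"
  unfolding Defs.setdist_def
proof (rule Min_eqI)
  show "finite (sdist x ` (Y \<union> P))" using assms(1,3) by simp
  have "Min (sdist x ` Y) \<in> sdist x ` Y" using assms(1,2) by simp
  then show "Min (sdist x ` Y) \<in> sdist x ` (Y \<union> P)" by blast
  fix d assume "d \<in> sdist x ` (Y \<union> P)"
  moreover obtain y where "y \<in> Y" using assms(2) by blast
  ultimately show "Min (sdist x ` Y) \<le> d"
    using assms(1) far by (auto intro: Min_le_iff[THEN iffD2])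
qed

context integral_normal
begin

lemma sdist_ray_ge:
  assumes "0 \<le> j"
  shows "of_int j \<le> sdist x (x - smul j n)"
proof -
  have "j\<^sup>2 * 1 \<le> j\<^sup>2 * idot n n"
    using one_le_idot_normal by (intro mult_left_mono) simp_all
  then have "(of_int j)\<^sup>2 \<le> (of_int (j\<^sup>2 * idot n n) :: real)"
    by (metis mult.right_neutral of_int_le_iff of_int_power)
  then show ?thesis unfolding sdist_def smul_def idot_def
    by (intro real_le_rsqrt) (simp add: power2_eq_square algebra_simps)
qed

lemma ray_in_H:
  assumes "l1 x < j"
  shows "x - smul j n \<in> H u"
proof -
  have "ip x u \<le> of_int (l1 x)" using abs_ip_le_l1[OF in_S1] by (rule abs_le_D1)
  moreover have "0 \<le> j" using assms by (simp add: l1_def)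
  then have "of_int j * 1 \<le> of_int j * ip n u"
    using sqrt_idot_normal_ge1 unfolding ip_normal by (intro mult_left_mono) simp_all
  ultimately have "ip (x - smul j n) u < 0" using assms by (simp add: ip_diff ip_smul)
  then show ?thesis by (simp add: H_iff)
qed

text \<open>Extra sites placed deep inside $\mathbb H_u$, far beyond the nearest site of $Y$, change neither
  the closure nor the distance to $x$.\<close>
lemma exists_padding:
  assumes Y: "finite Y" "Y \<noteq> {}" "card Y \<le> N"
  obtains Z where "finite Z" "card Z = N" "Y \<subseteq> Z" "Z - Y \<subseteq> H u" "setdist x Z = setdist x Y"
proof -
  obtain K0 where K0: "\<forall>y\<in>Y. \<lceil>sdist x y\<rceil> \<le> K0"
    using finite_bounded_above[OF Y(1), of "\<lambda>y. \<lceil>sdist x y\<rceil>"] by blast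
  define K where "K = max K0 (l1 x) + 1"
  define g where "g i = x - smul (K + int i) n" for i :: nat
  have far: "of_int (K + int i) \<le> sdist x (g i)" for i
    unfolding g_def K_def by (rule sdist_ray_ge) (simp add: l1_def)
  have "inj g"
  proof (rule injI)
    fix i j assume "g i = g j"
    then have "(K + int i) * fst n = (K + int j) * fst n" "(K + int i) * snd n = (K + int j) * snd n"
      unfolding g_def smul_def by (simp_all add: prod_eq_iff)
    with normal_nonzero show "i = j" by auto
  qed
  have gH: "g i \<in> H u" for i
    unfolding g_def K_def by (rule ray_in_H) simp
  have closer: "sdist x y < sdist x (g i)" if "y \<in> Y" for y i
  proof -
    have "sdist x y \<le> of_int K0" using K0 that by (meson ceiling_le_iff)
    then show ?thesis using far[of i] unfolding K_def by simp
  qed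
  then have gY: "g i \<notin> Y" for i by blast
  define Z where "Z = Y \<union> g ` {..<N - card Y}"
  have "Y \<inter> g ` {..<N - card Y} = {}" using gY by blast
  then have "card Z = card Y + card (g ` {..<N - card Y})"
    unfolding Z_def using Y(1) by (simp add: card_Un_disjoint)
  also have "\<dots> = N"
    using card_image[OF inj_on_subset[OF \<open>inj g\<close>], of "{..<N - card Y}"] Y(3) by simp
  finally have "card Z = N" .
  moreover have "setdist x Z = setdist x Y"
    unfolding Z_def
    using closer by (intro setdist_Un_far[OF Y(1,2)]) (auto intro: less_imp_le)
  moreover have "finite Z" "Y \<subseteq> Z" "Z - Y \<subseteq> H u" using Y(1) gH unfolding Z_def by auto
  ultimately show thesis using that by blast
qed

end

lemma (in stable_cover) uniform_halfplane_spread: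
  assumes "\<forall>u\<in>SB. line_finite U u m"
  obtains R where "\<forall>u\<in>SB. halfplane_spread_le U u m R"
proof -
  have "\<forall>u\<in>SB. \<exists>R. halfplane_spread_le U u m R"
  proof
    fix u assume u: "u \<in> SB"
    then obtain n where "integral_normal u n"
      using SB_rational_stable rational_dir_integral_normal by blast
    then interpret halfplane_cover U u n SB
      using u SB_rational_stable by unfold_locales (auto simp: integral_normal_def)
    show "\<exists>R. halfplane_spread_le U u m R"
      using assms u halfplane_spread_bounded by blast
  qed
  then obtain R where "\<forall>u\<in>SB. halfplane_spread_le U u m (R u)" by (rule bchoice[THEN exE])
  moreover obtain M where "\<forall>u\<in>SB. R u \<le> M"
    using finite_bounded_above[OF finite_SB, of R] by blast
  ultimately show thesis using halfplane_spread_le_mono that by (meson order_refl)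
qed

lemma (in stable_normal) setdist_halfplane_le_rho:
  assumes spread: "\<forall>u\<in>SB. halfplane_spread_le U u m R" and "u \<in> SB"
    and Y: "finite Y" "card Y \<le> m" and x: "x \<in> bp_closure U (H u \<union> Y) - H u"
  shows "setdist x Y \<le> rho U SB (Suc m)"
proof -
  have "Y \<noteq> {}" using x stable unfolding stable_def by auto
  then obtain Z where Z: "finite Z" "card Z = m" "Y \<subseteq> Z" "Z - Y \<subseteq> H u"
    and dist: "setdist x Z = setdist x Y"
    using exists_padding[OF Y(1) _ Y(2)] by blast
  have "H u \<union> Z = H u \<union> Y" using Z(3,4) by blast
  then have "setdist x Z \<le> rho U SB (Suc m)"
    using setdist_le_rho[of SB U "Suc m" R u Z x] spread \<open>u \<in> SB\<close> Z(1,2) x by simp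
  then show ?thesis using dist by simp
qed

lemma (in stable_normal) setdist_droplet_le_rho:
  assumes spread: "\<forall>u\<in>SB. halfplane_spread_le U u m R" and "u \<in> SB"
    and D: "D \<subseteq> Hs u a" and Y: "finite Y" "card Y \<le> m"
    and x: "x \<in> bp_closure U (D \<union> Y) - Hs u a"
  shows "setdist x Y \<le> rho U SB (Suc m)"
proof -
  define Y' where "Y' = (+) (- a) ` Y"
  obtain x' where x': "x' \<in> bp_closure U (H u \<union> Y')" "x = a + x'"
    using bp_closure_Un_subset_translate[OF update_family D] x unfolding Y'_def by blast
  moreover have "x' \<notin> H u" using x x'(2) unfolding Hs_eq_translate by blast
  moreover have "finite Y'" "card Y' \<le> m"
    using Y card_translate[of "- a" Y] unfolding Y'_def by simp_all
  ultimately have "setdist x' Y' \<le> rho U SB (Suc m)"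
    using setdist_halfplane_le_rho[OF spread \<open>u \<in> SB\<close>] by blast
  moreover have "Y = (+) a ` Y'" unfolding Y'_def image_image by simp
  ultimately show ?thesis using x'(2) setdist_translate by metis
qed

theorem mainTheorem8:
  fixes U :: "site set set" and SB :: "dir set" and a :: nat and D Y :: "site set"
  assumes "update_family U"
    and "critical_balanced U"
    and "alpha_U U = enat a"
    and "finite SB"
    and "\<forall>u\<in>SB. rational_dir u \<and> stable U u \<and> alpha_bar U u \<ge> enat a"
    and "\<forall>w\<in>S1. \<exists>u\<in>SB. ipr u w > 0"
    and "droplet SB D"
    and "finite Y" and "card Y \<le> a - 1"
  shows "\<forall>x \<in> bp_closure U (D \<union> Y) - D. setdist x Y \<le> rho U SB a"
proof
  fix x assume x: "x \<in> bp_closure U (D \<union> Y) - D"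
  interpret stable_cover U SB using assms(1,4,5,6) by unfold_locales blast+
  obtain m where a: "a = Suc m"
    using assms(2,3) unfolding critical_balanced_def by (cases a) (simp_all add: one_enat_def)
  have "\<forall>u\<in>SB. line_finite U u m" using assms(5) a line_finite_if_alpha_bar by blast
  then obtain R where spread: "\<forall>u\<in>SB. halfplane_spread_le U u m R"
    by (rule uniform_halfplane_spread)
  obtain b where D: "D = (\<Inter>u\<in>SB. Hs u (b u))" using assms(7) unfolding droplet_def by blast
  then obtain u where u: "u \<in> SB" "x \<notin> Hs u (b u)" using x by blast
  then obtain n where "integral_normal u n"
    using SB_rational_stable rational_dir_integral_normal by blast
  then interpret stable_normal U u n
    using u SB_rational_stable by unfold_locales (auto simp: integral_normal_def)
  have "D \<subseteq> Hs u (b u)" using u(1) unfolding D by blast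
  then show "setdist x Y \<le> rho U SB a"
    using setdist_droplet_le_rho[OF spread u(1)] x u(2) assms(8,9) a by simp
qed

end
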